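(* Assume the Margin assumption and Boundedness. For agents $A_0,\dots,A_T\in\mathcal{A}$, let $(y_t,b_t)$ be generated by the projected strategic perceptron with $\mathbb{L}=\mathbb{R}^d\times\mathbb{R}$ and $\gamma=1$, and let $\mathcal{M}_T$ be its set of mistake times. Then $$\sum_{t\in\mathcal{M}_T}L_{\mathrm{hinge}}\Big(\big(\tfrac{y_*}{d_*\|y_*\|_*},\tfrac{b_*}{d_*\|y_*\|_*}\big);(s(A_t,y_t,b_t),1),\ell(A_t)\Big)\le\frac{2}{cd_*}|\mathcal{M}_T|,$$ and consequently $$|\mathcal{M}_T|\le\frac{\|y_*\|_2^2+b_*^2}{\|y_*\|_*^2}\cdot\frac{\widetilde D^2+1}{\max\{0,d_*-2/c\}^2}$$ (in particular $|\mathcal{M}_T|$ is bounded independently of $T$ when $d_*>2/c$).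
   Context: Setting: $\mathcal{A}\subseteq\mathbb{R}^d$, labels $\ell(A)\in\{\pm1\}$; $\operatorname{sign}(0)=+1$; norm $\|\cdot\|$ with dual $\|y\|_*=\max_{\|w\|\le1}y^\top w$; constant $c>0$; a fixed selection $v$ with $v(0)=0$ and $v(y)\in\arg\max_{\|w\|\le1}y^\top w$ for $y\ne0$, with $v(\lambda y)=v(y)$ for $\lambda>0$. Predicted label $\hat\ell(x,y,b)=\operatorname{sign}(y^\top x+b-2\|y\|_*/c)$. Response: for $y\ne0$, $r(A,y,b)=A+(\tfrac2c-\tfrac{y^\top A+b}{\|y\|_*})v(y)$ if $0\le\tfrac{y^\top A+b}{\|y\|_*}<\tfrac2c$, else $A$. Proxy: for $y\ne0$, $s(A,y,b)=A-\tfrac{y^\top A+b}{\|y\|_*}v(y)$ if $0\le\tfrac{y^\top A+b}{\|y\|_*}<\tfrac2c$ and $\ell(A)=-1$; $=A+(\tfrac2c-\tfrac{y^\top A+b}{\|y\|_*})v(y)$ if the range condition holds and $\ell(A)=+1$; $=A$ otherwise; $r(A,0,b)=s(A,0,b)=A$. Margin assumption: $d_*:=\max_{y\ne0,b}\min_{A\in\mathcal{A}}\ell(A)\frac{y^\top A+b}{\|y\|_*}$ attained at $(y_*,b_* )$, $y_*\ne0$, $d_*>0$. Boundedness: $D:=\sup_{A\in\mathcal{A}}\|A\|_2<\infty$; $C_{\|\cdot\|}=\max_y\|v(y)\|_2$; $\widetilde D=D+\tfrac2cC_{\|\cdot\|}$. Hinge loss $L_{\mathrm{hinge}}(q;\xi,\ell)=\max\{0,1-\ell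 q^\top\xi\}$. Projected strategic perceptron with closed convex cone $\mathbb{L}$ and stepsize $\gamma$: $q_0=(y_0,b_0)=(0,0)$; for $t=0,\dots,T$: agent $A_t$ is shown $(y_t,b_t)$, responds $r(A_t,y_t,b_t)$, is predicted $\hat\ell(r(A_t,y_t,b_t),y_t,b_t)$; with $\xi_t=(s(A_t,y_t,b_t),1)$, $z_{t+1}=q_t+\gamma\ell(A_t)\xi_t$ on a mistake, else $z_{t+1}=q_t$; $q_{t+1}=(y_{t+1},b_{t+1})=\Pi_{\mathbb{L}}(z_{t+1})$. Mistake set $\mathcal{M}_T=\{t\in\{0,\dots,T\}:\hat\ell(r(A_t,y_t,b_t),y_t,b_t)\ne\ell(A_t)\}$. *)

theory Defs
  imports "HOL-Analysis.Analysis"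
begin

text \<open>An abstract norm on a Euclidean space (the paper's norm, distinct from the 2-norm).\<close>
definition is_norm :: "('a::euclidean_space \<Rightarrow> real) \<Rightarrow> bool" where
  "is_norm N \<longleftrightarrow> (\<forall>x. 0 \<le> N x) \<and> (\<forall>x. N x = 0 \<longleftrightarrow> x = 0)
     \<and> (\<forall>a x. N (a *\<^sub>R x) = \<bar>a\<bar> * N x) \<and> (\<forall>x y. N (x + y) \<le> N x + N y)"

definition dual_norm :: "('a::euclidean_space \<Rightarrow> real) \<Rightarrow> 'a \<Rightarrow> real" where
  "dual_norm N y = Sup {y \<bullet> w | w. N w \<le> 1}"

definition is_selection :: "('a::euclidean_space \<Rightarrow> real) \<Rightarrow> ('a \<Rightarrow> 'a) \<Rightarrow> bool" where
  "is_selection N v \<longleftrightarrow> v 0 = 0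
     \<and> (\<forall>y. y \<noteq> 0 \<longrightarrow> N (v y) \<le> 1 \<and> y \<bullet> v y = dual_norm N y)
     \<and> (\<forall>y k. 0 < k \<longrightarrow> v (k *\<^sub>R y) = v y)"

definition sgn1 :: "real \<Rightarrow> real" where
  "sgn1 x = (if 0 \<le> x then 1 else -1)"

definition pred_label :: "('a::euclidean_space \<Rightarrow> real) \<Rightarrow> real \<Rightarrow> 'a \<Rightarrow> 'a \<Rightarrow> real \<Rightarrow> real" where
  "pred_label N c x y b = sgn1 (y \<bullet> x + b - 2 * dual_norm N y / c)"

definition response :: "('a::euclidean_space \<Rightarrow> real) \<Rightarrow> ('a \<Rightarrow> 'a) \<Rightarrow> real \<Rightarrow> 'a \<Rightarrow> 'a \<Rightarrow> real \<Rightarrow> 'a" where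
  "response N v c A y b =
     (if y = 0 then A else
      (let m = (y \<bullet> A + b) / dual_norm N y in
       if 0 \<le> m \<and> m < 2 / c then A + (2 / c - m) *\<^sub>R v y else A))"

definition proxy :: "('a::euclidean_space \<Rightarrow> real) \<Rightarrow> ('a \<Rightarrow> 'a) \<Rightarrow> real \<Rightarrow> ('a \<Rightarrow> real) \<Rightarrow> 'a \<Rightarrow> 'a \<Rightarrow> real \<Rightarrow> 'a" where
  "proxy N v c lab A y b =
     (if y = 0 then A else
      (let m = (y \<bullet> A + b) / dual_norm N y in
       if 0 \<le> m \<and> m < 2 / c then
         (if lab A = -1 then A - m *\<^sub>R v y
          else if lab A = 1 then A + (2 / c - m) *\<^sub>R v y else A)
       else A))"

primrec perceptron :: "('a::euclidean_space \<Rightarrow> real) \<Rightarrow> ('a \<Rightarrow> 'a) \<Rightarrow> real \<Rightarrow> ('a \<Rightarrow> real)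
    \<Rightarrow> ('a \<times> real) set \<Rightarrow> real \<Rightarrow> (nat \<Rightarrow> 'a) \<Rightarrow> nat \<Rightarrow> 'a \<times> real" where
  "perceptron N v c lab L \<gamma> Ag 0 = (0, 0)"
| "perceptron N v c lab L \<gamma> Ag (Suc t) =
     (let q = perceptron N v c lab L \<gamma> Ag t; y = fst q; b = snd q;
          z = (if pred_label N c (response N v c (Ag t) y b) y b \<noteq> lab (Ag t)
               then q + \<gamma> *\<^sub>R (lab (Ag t) *\<^sub>R (proxy N v c lab (Ag t) y b, 1))
               else q)
      in closest_point L z)"

definition mistakes :: "('a::euclidean_space \<Rightarrow> real) \<Rightarrow> ('a \<Rightarrow> 'a) \<Rightarrow> real \<Rightarrow> ('a \<Rightarrow> real)
    \<Rightarrow> ('a \<times> real) set \<Rightarrow> real \<Rightarrow> (nat \<Rightarrow> 'a) \<Rightarrow> nat \<Rightarrow> nat set" where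
  "mistakes N v c lab L \<gamma> Ag T =
     {t \<in> {0..T}. let q = perceptron N v c lab L \<gamma> Ag t in
        pred_label N c (response N v c (Ag t) (fst q) (snd q)) (fst q) (snd q) \<noteq> lab (Ag t)}"

definition hinge :: "('a::euclidean_space \<times> real) \<Rightarrow> ('a \<times> real) \<Rightarrow> real \<Rightarrow> real" where
  "hinge q \<xi> l = max 0 (1 - l * (q \<bullet> \<xi>))"

definition margin :: "('a::euclidean_space \<Rightarrow> real) \<Rightarrow> 'a set \<Rightarrow> ('a \<Rightarrow> real) \<Rightarrow> 'a \<Rightarrow> real \<Rightarrow> real" where
  "margin N \<A> lab y b = Inf {lab A * (y \<bullet> A + b) / dual_norm N y | A. A \<in> \<A>}"

end

theory Submission
  imports Defs
begin

text \<open>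
  On every mistake the proxy point is misclassified (or lies on the boundary) by the current
  classifier, while the best classifier \<open>(y\<^sub>*, b\<^sub>*)\<close> still separates every proxy point with
  normalised margin at least \<open>d\<^sub>* - 2/c\<close>, since the proxy moves an agent by at most \<open>2/c\<close> times a
  vector of norm at most one.  The classical Novikoff argument then applies verbatim: the
  correlation with \<open>(y\<^sub>*, b\<^sub>*)\<close> grows linearly in the number of mistakes, the squared norm of
  the iterate at most linearly.
\<close>

lemma is_normD:
  assumes "is_norm N"
  shows "N 0 = 0" "N (-x) = N x" "N (a *\<^sub>R x) = \<bar>a\<bar> * N x" "N (x + y) \<le> N x + N y"
    "0 \<le> N x" "N x = 0 \<longleftrightarrow> x = 0"
  using assms unfolding is_norm_def
  by (auto, metis abs_minus_cancel abs_one mult_1 scaleR_minus1_left)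

lemma is_norm_dominates_norm:
  fixes N :: "'a::euclidean_space \<Rightarrow> real"
  assumes n: "is_norm N"
  obtains K where "0 < K" "\<And>w. norm w \<le> K * N w"
proof -
  have "convex_on UNIV N"
  proof (rule convex_onI)
    fix t :: real and x y :: 'a assume t: "0 < t" "t < 1"
    have "N ((1 - t) *\<^sub>R x + t *\<^sub>R y) \<le> N ((1 - t) *\<^sub>R x) + N (t *\<^sub>R y)"
      using is_normD[OF n] by blast
    also have "\<dots> = (1 - t) * N x + t * N y" using t is_normD(3)[OF n] by simp
    finally show "N ((1 - t) *\<^sub>R x + t *\<^sub>R y) \<le> (1 - t) * N x + t * N y" .
  qed simp
  then have "continuous_on (sphere 0 1) N"
    by (intro continuous_on_subset[OF convex_on_continuous]) auto
  moreover obtain i :: 'a where "i \<in> Basis" using nonempty_Basis by blast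
  then have "sphere (0::'a) 1 \<noteq> {}" by (auto intro!: exI[of _ i])
  ultimately obtain x0 where x0: "x0 \<in> sphere 0 1" "\<And>y. y \<in> sphere 0 1 \<Longrightarrow> N x0 \<le> N y"
    using continuous_attains_inf[OF compact_sphere] by blast
  define m where "m = N x0"
  have m_pos: "0 < m"
    using x0(1) is_normD(5,6)[OF n, of x0] unfolding m_def by force
  have "m * norm w \<le> N w" for w
  proof (cases "w = 0")
    case False
    then have "m \<le> N ((1 / norm w) *\<^sub>R w)" using x0(2) m_def by simp
    also have "\<dots> = N w / norm w" using is_normD(3)[OF n] by simp
    finally show ?thesis using False by (simp add: field_simps)
  qed (simp add: is_normD[OF n])
  then show thesis using m_pos by (intro that[of "1 / m"]) (auto simp: field_simps)
qed

lemma is_norm_unit_ball_norm_bound: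
  fixes N :: "'a::euclidean_space \<Rightarrow> real"
  assumes "is_norm N"
  obtains K where "\<And>w. N w \<le> 1 \<Longrightarrow> norm w \<le> K"
proof -
  obtain K where K: "0 < K" "\<And>w. norm w \<le> K * N w"
    using is_norm_dominates_norm[OF assms] by blast
  have "norm w \<le> K" if "N w \<le> 1" for w
  proof -
    have "K * N w \<le> K" using mult_left_mono[OF that, of K] K(1) by simp
    then show ?thesis using K(2)[of w] by linarith
  qed
  then show thesis by (rule that)
qed

lemma inner_le_dual_norm:
  fixes N :: "'a::euclidean_space \<Rightarrow> real"
  assumes n: "is_norm N" and w: "N w \<le> 1"
  shows "y \<bullet> w \<le> dual_norm N y"
proof -
  obtain K where K: "\<And>w. N w \<le> 1 \<Longrightarrow> norm w \<le> K"
    using is_norm_unit_ball_norm_bound[OF n] by blast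
  have "y \<bullet> w' \<le> norm y * K" if "N w' \<le> 1" for w'
    using norm_cauchy_schwarz[of y w'] K[OF that] mult_left_mono[of "norm w'" K "norm y"]
    by simp
  then have "bdd_above {y \<bullet> w | w. N w \<le> 1}" by (auto simp: bdd_above_def)
  then show ?thesis unfolding dual_norm_def using w by (intro cSup_upper) auto
qed

lemma abs_inner_le_dual_norm:
  fixes N :: "'a::euclidean_space \<Rightarrow> real"
  assumes n: "is_norm N" and "N w \<le> 1"
  shows "\<bar>y \<bullet> w\<bar> \<le> dual_norm N y"
  using inner_le_dual_norm[OF n, of w y] inner_le_dual_norm[OF n, of "-w" y] assms is_normD(2)[OF n]
  by (simp add: abs_le_iff)

lemma dual_norm_pos:
  fixes N :: "'a::euclidean_space \<Rightarrow> real"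
  assumes n: "is_norm N" and y: "y \<noteq> 0"
  shows "0 < dual_norm N y"
proof -
  have Ny: "0 < N y" using is_normD(5,6)[OF n, of y] y by (metis less_le)
  then have "N ((1 / N y) *\<^sub>R y) = 1" using is_normD(3)[OF n] by simp
  then have "y \<bullet> ((1 / N y) *\<^sub>R y) \<le> dual_norm N y" by (intro inner_le_dual_norm[OF n]) auto
  moreover have "0 < y \<bullet> ((1 / N y) *\<^sub>R y)" using Ny y by simp
  ultimately show ?thesis by linarith
qed

lemma dual_norm_0:
  assumes "is_norm N"
  shows "dual_norm N 0 = 0"
proof -
  have "N 0 \<le> 1" using is_normD(1)[OF assms] by simp
  then have "{0 \<bullet> w | w. N w \<le> 1} = {0::real}" by (auto intro!: exI[of _ 0])
  then show ?thesis unfolding dual_norm_def by simp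
qed

lemma is_selectionD:
  assumes "is_selection N v" and "y \<noteq> 0"
  shows "N (v y) \<le> 1" "y \<bullet> v y = dual_norm N y"
  using assms unfolding is_selection_def by auto

lemma selection_norm_le_1:
  assumes "is_norm N" and "is_selection N v"
  shows "N (v y) \<le> 1"
proof (cases "y = 0")
  case True
  moreover have "v 0 = 0" using assms(2) unfolding is_selection_def by blast
  ultimately show ?thesis using is_normD(1)[OF assms(1)] by simp
qed (rule is_selectionD(1)[OF assms(2)])

lemma bdd_above_norm_selection:
  fixes N :: "'a::euclidean_space \<Rightarrow> real"
  assumes n: "is_norm N" and sel: "is_selection N v"
  shows "bdd_above (range (\<lambda>y. norm (v y)))"
proof -
  obtain K where K: "\<And>w. N w \<le> 1 \<Longrightarrow> norm w \<le> K"
    using is_norm_unit_ball_norm_bound[OF n] by blast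
  have "norm (v y) \<le> K" for y by (rule K[OF selection_norm_le_1[OF n sel]])
  then show ?thesis by (rule bdd_aboveI2)
qed

lemma abs_inner_selection_le_dual_norm:
  fixes N :: "'a::euclidean_space \<Rightarrow> real"
  assumes "is_norm N" and "is_selection N v"
  shows "\<bar>z \<bullet> v y\<bar> \<le> dual_norm N z"
  by (rule abs_inner_le_dual_norm[OF assms(1) selection_norm_le_1[OF assms]])

text \<open>An agent whose score lies in \<open>[0, 2\<parallel>y\<parallel>\<^sub>*/c)\<close> moves exactly onto the raised threshold,
  so the manipulation undoes the \<open>2\<parallel>y\<parallel>\<^sub>*/c\<close> shift of the predictor.\<close>

lemma pred_label_response:
  fixes N :: "'a::euclidean_space \<Rightarrow> real"
  assumes n: "is_norm N" and sel: "is_selection N v" and c: "0 < c"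
  shows "pred_label N c (response N v c A y b) y b = sgn1 (y \<bullet> A + b)"
proof (cases "y = 0")
  case True
  then show ?thesis by (simp add: pred_label_def response_def dual_norm_0[OF n])
next
  case y: False
  define D where "D = dual_norm N y"
  define m where "m = (y \<bullet> A + b) / D"
  have D: "0 < D" "y \<bullet> v y = D" using dual_norm_pos[OF n y] is_selectionD(2)[OF sel y] D_def by auto
  have score: "y \<bullet> A + b = m * D" using D by (simp add: m_def)
  have response: "response N v c A y b = (if 0 \<le> m \<and> m < 2 / c then A + (2 / c - m) *\<^sub>R v y else A)"
    using y by (simp add: response_def Let_def m_def D_def)
  have pred: "pred_label N c (response N v c A y b) y b
      = sgn1 (y \<bullet> response N v c A y b + b - 2 * D / c)"
    by (simp add: pred_label_def D_def)
  have "0 < 2 / c" using c by simp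
  consider "0 \<le> m" "m < 2 / c" | "m < 0" | "2 / c \<le> m" by linarith
  then show ?thesis
  proof cases
    case 1
    then have r: "response N v c A y b = A + (2 / c - m) *\<^sub>R v y" using response by simp
    have "y \<bullet> response N v c A y b + b - 2 * D / c = y \<bullet> A + b - m * D"
      unfolding r inner_add_right inner_scaleR_right D(2) using c by (simp add: field_simps)
    then have "y \<bullet> response N v c A y b + b - 2 * D / c = 0" using score by simp
    then show ?thesis using pred 1 score D by (simp add: sgn1_def)
  next
    case 2
    then have "m * D < 0" using D mult_neg_pos by blast
    moreover have "0 < 2 * D / c" using D c by simp
    ultimately show ?thesis using pred response 2 score by (simp add: sgn1_def)
  next
    case 3
    then have "2 / c * D \<le> m * D" using D by (intro mult_right_mono) auto
    then have "2 * D / c \<le> m * D" by simp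
    moreover have "0 < m" using 3 \<open>0 < 2 / c\<close> by linarith
    then have "0 \<le> m * D" using D by simp
    ultimately show ?thesis using pred response 3 score by (simp add: sgn1_def)
  qed
qed

lemma proxy_misclassified:
  fixes N :: "'a::euclidean_space \<Rightarrow> real"
  assumes n: "is_norm N" and sel: "is_selection N v"
    and lab: "lab A = 1 \<or> lab A = -1" and mistake: "sgn1 (y \<bullet> A + b) \<noteq> lab A"
  shows "lab A * (y \<bullet> proxy N v c lab A y b + b) \<le> 0"
proof (cases "y = 0")
  case True
  then show ?thesis using lab mistake by (auto simp: proxy_def sgn1_def split: if_splits)
next
  case y: False
  define D where "D = dual_norm N y"
  define m where "m = (y \<bullet> A + b) / D"
  have D: "0 < D" "y \<bullet> v y = D" using dual_norm_pos[OF n y] is_selectionD(2)[OF sel y] D_def by auto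
  have score: "y \<bullet> A + b = m * D" using D by (simp add: m_def)
  show ?thesis
  proof (cases "lab A = 1")
    case True
    then have "m * D < 0" using mistake score by (simp add: sgn1_def split: if_splits)
    then have "m < 0" using D by (simp add: mult_less_0_iff)
    then have "proxy N v c lab A y b = A" using y by (simp add: proxy_def Let_def m_def D_def)
    then show ?thesis using True score \<open>m * D < 0\<close> by simp
  next
    case False
    then have "lab A = -1" "0 \<le> m * D"
      using lab mistake score by (auto simp: sgn1_def split: if_splits)
    then have "proxy N v c lab A y b = (if m < 2 / c then A - m *\<^sub>R v y else A)"
      using y D by (simp add: proxy_def Let_def m_def D_def zero_le_mult_iff)
    then show ?thesis using \<open>lab A = -1\<close> \<open>0 \<le> m * D\<close> score D by (simp add: inner_diff_right)
  qed
qed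

lemma mistake_imp_proxy_misclassified:
  fixes N :: "'a::euclidean_space \<Rightarrow> real"
  assumes "is_norm N" and "is_selection N v" and "0 < c" and "lab A = 1 \<or> lab A = -1"
    and "pred_label N c (response N v c A y b) y b \<noteq> lab A"
  shows "lab A * ((y, b) \<bullet> (proxy N v c lab A y b, 1)) \<le> 0"
  using proxy_misclassified[where lab = lab and A = A, OF assms(1,2,4)] assms(5)
    pred_label_response[OF assms(1-3)]
  by (simp add: inner_Pair)

lemma proxy_eq_shift:
  assumes c: "0 < c"
  obtains \<beta> where "\<bar>\<beta>\<bar> \<le> 2 / c" "proxy N v c lab A y b = A + \<beta> *\<^sub>R v y"
proof
  define m where "m = (y \<bullet> A + b) / dual_norm N y"
  define \<beta> where "\<beta> = (if y \<noteq> 0 \<and> 0 \<le> m \<and> m < 2 / c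
    then if lab A = -1 then - m else if lab A = 1 then 2 / c - m else 0 else 0)"
  show "\<bar>\<beta>\<bar> \<le> 2 / c" using c by (simp add: \<beta>_def)
  show "proxy N v c lab A y b = A + \<beta> *\<^sub>R v y"
    by (simp add: proxy_def Let_def \<beta>_def m_def)
qed

lemma norm_proxy_le:
  fixes N :: "'a::euclidean_space \<Rightarrow> real"
  assumes n: "is_norm N" and sel: "is_selection N v" and c: "0 < c"
    and "bounded \<A>" and "A \<in> \<A>"
  shows "norm (proxy N v c lab A y b) \<le> Sup (norm ` \<A>) + 2 / c * Sup (range (\<lambda>y. norm (v y)))"
proof -
  obtain \<beta> where \<beta>: "\<bar>\<beta>\<bar> \<le> 2 / c" "proxy N v c lab A y b = A + \<beta> *\<^sub>R v y"
    using proxy_eq_shift[OF c] by blast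
  have "norm A \<le> Sup (norm ` \<A>)"
    using assms by (intro cSup_upper) (auto simp: bounded_imp_bdd_above bounded_norm_comp)
  moreover have "norm (v y) \<le> Sup (range (\<lambda>y. norm (v y)))"
    using bdd_above_norm_selection[OF n sel] by (intro cSup_upper) auto
  then have "\<bar>\<beta>\<bar> * norm (v y) \<le> 2 / c * Sup (range (\<lambda>y. norm (v y)))"
    using \<beta>(1) c by (intro mult_mono) auto
  moreover have "norm (A + \<beta> *\<^sub>R v y) \<le> norm A + \<bar>\<beta>\<bar> * norm (v y)"
    by (metis norm_scaleR norm_triangle_ineq)
  ultimately show ?thesis unfolding \<beta>(2) by linarith
qed

lemma norm_proxy_Pair_sq_le:
  fixes N :: "'a::euclidean_space \<Rightarrow> real"
  assumes "is_norm N" and "is_selection N v" and "0 < c" and "bounded \<A>" and "A \<in> \<A>"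
  shows "norm (proxy N v c lab A y b, 1::real) ^ 2
    \<le> (Sup (norm ` \<A>) + 2 / c * Sup (range (\<lambda>y. norm (v y)))) ^ 2 + 1"
  using power_mono[OF norm_proxy_le[OF assms] norm_ge_zero, where n = 2] by (simp add: norm_Pair)

lemma margin_le:
  fixes N :: "'a::euclidean_space \<Rightarrow> real"
  assumes "bounded \<A>" and lab: "\<forall>A\<in>\<A>. lab A = 1 \<or> lab A = -1" and "A \<in> \<A>"
  shows "margin N \<A> lab y b \<le> lab A * (y \<bullet> A + b) / dual_norm N y"
proof -
  obtain B where B: "\<And>x. x \<in> \<A> \<Longrightarrow> norm x \<le> B" using assms(1) by (auto simp: bounded_iff)
  define f where "f x = lab x * (y \<bullet> x + b) / dual_norm N y" for x
  have "- ((norm y * B + \<bar>b\<bar>) / \<bar>dual_norm N y\<bar>) \<le> f x" if x: "x \<in> \<A>" for x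
  proof -
    have "\<bar>y \<bullet> x\<bar> \<le> norm y * B"
      using Cauchy_Schwarz_ineq2[of y x] mult_left_mono[OF B[OF x], of "norm y"] by simp
    then have "\<bar>lab x * (y \<bullet> x + b)\<bar> \<le> norm y * B + \<bar>b\<bar>" using lab x by auto
    then have "\<bar>f x\<bar> \<le> (norm y * B + \<bar>b\<bar>) / \<bar>dual_norm N y\<bar>"
      unfolding f_def abs_divide by (rule divide_right_mono) simp
    then show ?thesis by linarith
  qed
  then have "bdd_below (f ` \<A>)" by (rule bdd_belowI2)
  then have "(INF x\<in>\<A>. f x) \<le> f A" using assms(3) by (rule cINF_lower)
  moreover have "margin N \<A> lab y b = (INF x\<in>\<A>. f x)" by (simp add: margin_def f_def Setcompr_eq_image)
  ultimately show ?thesis by (simp add: f_def)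
qed

lemma proxy_margin_ge:
  fixes N :: "'a::euclidean_space \<Rightarrow> real"
  assumes n: "is_norm N" and sel: "is_selection N v" and c: "0 < c"
    and "bounded \<A>" and lab: "\<forall>A\<in>\<A>. lab A = 1 \<or> lab A = -1" and A: "A \<in> \<A>"
    and y: "y \<noteq> 0" and d: "0 < d" "d \<le> margin N \<A> lab y b"
  shows "1 - 2 / (c * d) \<le>
    lab A * ((y /\<^sub>R (d * dual_norm N y), b / (d * dual_norm N y)) \<bullet> (proxy N v c lab A y' b', 1))"
proof -
  define D where "D = dual_norm N y"
  have D: "0 < D" using dual_norm_pos[OF n y] D_def by simp
  obtain \<beta> where \<beta>: "\<bar>\<beta>\<bar> \<le> 2 / c" "proxy N v c lab A y' b' = A + \<beta> *\<^sub>R v y'"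
    using proxy_eq_shift[OF c] by blast
  have "d \<le> lab A * (y \<bullet> A + b) / D"
    using order_trans[OF d(2) margin_le[OF assms(4) lab A]] D_def by simp
  then have score: "d * D \<le> lab A * (y \<bullet> A + b)" using D by (simp add: field_simps)
  have "\<bar>\<beta>\<bar> * \<bar>y \<bullet> v y'\<bar> \<le> 2 / c * D"
    using \<beta>(1) abs_inner_selection_le_dual_norm[OF n sel] D_def c by (intro mult_mono) auto
  then have "\<bar>lab A * \<beta> * (y \<bullet> v y')\<bar> \<le> 2 / c * D"
    using lab A by (auto simp: abs_mult)
  then have "d * D - 2 / c * D \<le> lab A * (y \<bullet> (A + \<beta> *\<^sub>R v y') + b)"
    using score by (simp add: inner_add_right algebra_simps abs_le_iff)
  then have "(d * D - 2 / c * D) / (d * D) \<le> lab A * (y \<bullet> (A + \<beta> *\<^sub>R v y') + b) / (d * D)"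
    using D d by (simp add: divide_right_mono)
  moreover have "(d * D - 2 / c * D) / (d * D) = 1 - 2 / (c * d)"
    using D d c by (simp add: field_simps)
  moreover have "lab A * ((y /\<^sub>R (d * D), b / (d * D)) \<bullet> (A + \<beta> *\<^sub>R v y', 1))
      = lab A * (y \<bullet> (A + \<beta> *\<^sub>R v y') + b) / (d * D)"
    using D d by (simp add: inner_Pair field_simps)
  ultimately show ?thesis using \<beta>(2) D_def by simp
qed

lemma hinge_le:
  assumes "0 \<le> e" and "1 - e \<le> l * (q \<bullet> \<xi>)"
  shows "hinge q \<xi> l \<le> e"
  using assms unfolding hinge_def by simp

lemma perceptron_UNIV_Suc:
  "perceptron N v c lab UNIV 1 Ag (Suc t) =
    (let q = perceptron N v c lab UNIV 1 Ag t in
     if pred_label N c (response N v c (Ag t) (fst q) (snd q)) (fst q) (snd q) \<noteq> lab (Ag t)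
     then q + lab (Ag t) *\<^sub>R (proxy N v c lab (Ag t) (fst q) (snd q), 1) else q)"
  unfolding perceptron.simps Let_def closest_point_self[OF UNIV_I] scaleR_one ..

text \<open>Novikoff's argument, abstracted: \<open>x t\<close> is the example of round \<open>t\<close>, \<open>l t\<close> its label,
  and the iterate is updated exactly at the rounds \<open>mis t\<close>.\<close>

lemma perceptron_invariant:
  fixes q x :: "nat \<Rightarrow> 'b::real_inner"
  assumes "q 0 = 0"
    and "\<And>t. t < n \<Longrightarrow> q (Suc t) = (if mis t then q t + l t *\<^sub>R x t else q t)"
    and "\<And>t. t < n \<Longrightarrow> mis t \<Longrightarrow> \<bar>l t\<bar> = 1"
    and "\<And>t. t < n \<Longrightarrow> mis t \<Longrightarrow> l t * (q t \<bullet> x t) \<le> 0"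
    and "\<And>t. t < n \<Longrightarrow> mis t \<Longrightarrow> norm (x t) ^ 2 \<le> R"
    and "\<And>t. t < n \<Longrightarrow> mis t \<Longrightarrow> g \<le> l t * (u \<bullet> x t)"
  shows "g * card {t. t < n \<and> mis t} \<le> u \<bullet> q n \<and> norm (q n) ^ 2 \<le> R * card {t. t < n \<and> mis t}"
  using assms
proof (induction n)
  case 0
  then show ?case by simp
next
  case (Suc n)
  then have IH: "g * card {t. t < n \<and> mis t} \<le> u \<bullet> q n" "norm (q n) ^ 2 \<le> R * card {t. t < n \<and> mis t}"
    by auto
  show ?case
  proof (cases "mis n")
    case False
    then have "{t. t < Suc n \<and> mis t} = {t. t < n \<and> mis t}" by (auto simp: less_Suc_eq)
    then show ?thesis using IH Suc.prems(2)[of n] False by simp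
  next
    case True
    then have "{t. t < Suc n \<and> mis t} = insert n {t. t < n \<and> mis t}" by auto
    then have card: "real (card {t. t < Suc n \<and> mis t}) = card {t. t < n \<and> mis t} + 1" by simp
    have "norm (q n + l n *\<^sub>R x n) ^ 2
        = norm (q n) ^ 2 + 2 * (q n \<bullet> (l n *\<^sub>R x n)) + norm (l n *\<^sub>R x n) ^ 2"
      unfolding power2_norm_eq_inner by (simp add: inner_add_left inner_add_right inner_commute)
    moreover have "norm (l n *\<^sub>R x n) = norm (x n)" using Suc.prems(3)[of n] True by simp
    ultimately have "norm (q (Suc n)) ^ 2 = norm (q n) ^ 2 + 2 * (l n * (q n \<bullet> x n)) + norm (x n) ^ 2"
      using Suc.prems(2)[of n] True by simp
    then show ?thesis using IH card True Suc.prems(2,4-6)[of n]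
      by (auto simp: inner_add_right algebra_simps)
  qed
qed

lemma perceptron_mistake_bound:
  fixes q x :: "nat \<Rightarrow> 'b::real_inner"
  assumes "q 0 = 0"
    and "\<And>t. t < n \<Longrightarrow> q (Suc t) = (if mis t then q t + l t *\<^sub>R x t else q t)"
    and "\<And>t. t < n \<Longrightarrow> mis t \<Longrightarrow> \<bar>l t\<bar> = 1"
    and "\<And>t. t < n \<Longrightarrow> mis t \<Longrightarrow> l t * (q t \<bullet> x t) \<le> 0"
    and "\<And>t. t < n \<Longrightarrow> mis t \<Longrightarrow> norm (x t) ^ 2 \<le> R"
    and "\<And>t. t < n \<Longrightarrow> mis t \<Longrightarrow> g \<le> l t * (u \<bullet> x t)"
    and g: "0 < g" and R: "0 \<le> R"
  shows "card {t. t < n \<and> mis t} \<le> norm u ^ 2 * R / g ^ 2"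
proof -
  define k where "k = real (card {t. t < n \<and> mis t})"
  have inv: "g * k \<le> u \<bullet> q n" "norm (q n) ^ 2 \<le> R * k"
    using perceptron_invariant[OF assms(1-6)] k_def by auto
  have "(g * k) ^ 2 \<le> (norm u * norm (q n)) ^ 2"
    using inv(1) norm_cauchy_schwarz[of u "q n"] g k_def by (intro power_mono) auto
  also have "\<dots> \<le> norm u ^ 2 * (R * k)"
    using inv(2) by (simp add: power_mult_distrib mult_left_mono)
  finally have "g ^ 2 * k * k \<le> (norm u ^ 2 * R) * k" by (simp add: power2_eq_square algebra_simps)
  then have "g ^ 2 * k \<le> norm u ^ 2 * R"
    using R k_def by (cases "k = 0") (auto simp: mult_le_cancel_right)
  then show ?thesis using g k_def by (simp add: field_simps)
qed

lemma normalized_classifier_bound_eq: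
  fixes y :: "'a::real_normed_vector"
  assumes "0 < d" and "0 < D" and "e < d"
  shows "norm (y /\<^sub>R (d * D), b / (d * D)) ^ 2 * R / (1 - e / d) ^ 2
    = (norm y ^ 2 + b ^ 2) / D ^ 2 * R / (max 0 (d - e)) ^ 2"
proof -
  have "norm (y /\<^sub>R (d * D)) = norm y / (d * D)" using assms by (simp add: field_simps)
  then have "norm (y /\<^sub>R (d * D), b / (d * D)) ^ 2 = (norm y ^ 2 + b ^ 2) / (d * D) ^ 2"
    by (simp add: norm_Pair power_divide add_divide_distrib flip: abs_divide)
  moreover have "1 - e / d = (d - e) / d" "max 0 (d - e) = d - e" using assms by (simp_all add: field_simps)
  ultimately show ?thesis using assms by (simp add: power_divide power_mult_distrib)
qed

lemma strategic_perceptron_mistake_bound: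
  fixes N :: "'a::euclidean_space \<Rightarrow> real"
  assumes norm: "is_norm N" and sel: "is_selection N v" and c: "0 < c"
    and labels: "\<forall>A\<in>\<A>. lab A = 1 \<or> lab A = -1" and bounded: "bounded \<A>"
    and agents: "\<forall>t\<le>T. Ag t \<in> \<A>"
    and y: "y \<noteq> 0" and d: "0 < d" "d \<le> margin N \<A> lab y b" and gt: "2 / c < d"
  shows "card (mistakes N v c lab UNIV 1 Ag T)
    \<le> norm (y /\<^sub>R (d * dual_norm N y), b / (d * dual_norm N y)) ^ 2
      * ((Sup (norm ` \<A>) + 2 / c * Sup (range (\<lambda>y. norm (v y)))) ^ 2 + 1) / (1 - 2 / (c * d)) ^ 2"
proof -
  define q where "q = perceptron N v c lab UNIV 1 Ag"
  define mis where "mis t \<longleftrightarrow>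
    pred_label N c (response N v c (Ag t) (fst (q t)) (snd (q t))) (fst (q t)) (snd (q t)) \<noteq> lab (Ag t)"
    for t
  define \<xi> where "\<xi> t = (proxy N v c lab (Ag t) (fst (q t)) (snd (q t)), 1::real)" for t
  define R where "R = (Sup (norm ` \<A>) + 2 / c * Sup (range (\<lambda>y. norm (v y)))) ^ 2 + 1"
  have agent: "Ag t \<in> \<A>" if "t < Suc T" for t using agents that by simp
  have "mistakes N v c lab UNIV 1 Ag T = {t. t < Suc T \<and> mis t}"
    by (auto simp: mistakes_def Let_def q_def mis_def)
  moreover have "card {t. t < Suc T \<and> mis t}
    \<le> norm (y /\<^sub>R (d * dual_norm N y), b / (d * dual_norm N y)) ^ 2 * R / (1 - 2 / (c * d)) ^ 2"
  proof (rule perceptron_mistake_bound[where x = \<xi> and l = "\<lambda>t. lab (Ag t)"])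
    show "q 0 = 0" by (simp add: q_def zero_prod_def)
    show "q (Suc t) = (if mis t then q t + lab (Ag t) *\<^sub>R \<xi> t else q t)" for t
      unfolding q_def mis_def \<xi>_def perceptron_UNIV_Suc Let_def ..
    show "\<bar>lab (Ag t)\<bar> = 1" if "t < Suc T" for t
      using labels agent[OF that] by fastforce
    show "lab (Ag t) * (q t \<bullet> \<xi> t) \<le> 0" if "t < Suc T" "mis t" for t
      using mistake_imp_proxy_misclassified[OF norm sel c, of lab "Ag t" "fst (q t)" "snd (q t)"]
        labels agent[OF that(1)] that(2)
      unfolding mis_def \<xi>_def by simp
    show "norm (\<xi> t) ^ 2 \<le> R" if "t < Suc T" for t
      using norm_proxy_Pair_sq_le[OF norm sel c bounded agent[OF that]] unfolding \<xi>_def R_def .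
    show "1 - 2 / (c * d) \<le> lab (Ag t) * ((y /\<^sub>R (d * dual_norm N y), b / (d * dual_norm N y)) \<bullet> \<xi> t)"
      if "t < Suc T" for t
      unfolding \<xi>_def by (rule proxy_margin_ge[OF norm sel c bounded labels agent[OF that] y d])
    show "0 < 1 - 2 / (c * d)" "0 \<le> R" using gt d c by (simp_all add: R_def field_simps)
  qed
  ultimately show ?thesis unfolding R_def by simp
qed

theorem mainTheorem16:
  fixes N :: "'a::euclidean_space \<Rightarrow> real" and v :: "'a \<Rightarrow> 'a"
    and c :: real and lab :: "'a \<Rightarrow> real" and \<A> :: "'a set"
    and ystar :: 'a and bstar dstar :: real
    and Ag :: "nat \<Rightarrow> 'a" and T :: nat
  assumes norm: "is_norm N"
    and sel: "is_selection N v"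
    and c_pos: "0 < c"
    and labels: "\<forall>A\<in>\<A>. lab A = 1 \<or> lab A = -1"
    and ystar_nz: "ystar \<noteq> 0"
    and dstar_def: "dstar = margin N \<A> lab ystar bstar"
    and dstar_max: "\<forall>y b. y \<noteq> 0 \<longrightarrow> margin N \<A> lab y b \<le> dstar"
    and dstar_pos: "0 < dstar"
    and bounded: "bounded \<A>"
    and agents: "\<forall>t\<le>T. Ag t \<in> \<A>"
  shows "((\<Sum>t\<in>mistakes N v c lab UNIV 1 Ag T.
            hinge (ystar /\<^sub>R (dstar * dual_norm N ystar), bstar / (dstar * dual_norm N ystar))
                  (proxy N v c lab (Ag t) (fst (perceptron N v c lab UNIV 1 Ag t))
                                          (snd (perceptron N v c lab UNIV 1 Ag t)), 1)
                  (lab (Ag t)))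
           \<le> 2 / (c * dstar) * real (card (mistakes N v c lab UNIV 1 Ag T))) \<and>
         (dstar > 2 / c \<longrightarrow>
           real (card (mistakes N v c lab UNIV 1 Ag T))
             \<le> (norm ystar ^ 2 + bstar ^ 2) / dual_norm N ystar ^ 2
               * ((Sup (norm ` \<A>) + 2 / c * Sup (range (\<lambda>y. norm (v y)))) ^ 2 + 1)
               / (max 0 (dstar - 2 / c)) ^ 2)"
proof -
  define u where "u = (ystar /\<^sub>R (dstar * dual_norm N ystar), bstar / (dstar * dual_norm N ystar))"
  define M where "M = mistakes N v c lab UNIV 1 Ag T"
  define s where "s t = proxy N v c lab (Ag t) (fst (perceptron N v c lab UNIV 1 Ag t))
    (snd (perceptron N v c lab UNIV 1 Ag t))" for t
  have margin: "dstar \<le> margin N \<A> lab ystar bstar" using dstar_def by simp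
  have "hinge u (s t, 1) (lab (Ag t)) \<le> 2 / (c * dstar)" if "t \<in> M" for t
  proof (rule hinge_le)
    have "Ag t \<in> \<A>" using that agents by (simp add: M_def mistakes_def)
    then show "1 - 2 / (c * dstar) \<le> lab (Ag t) * (u \<bullet> (s t, 1))" unfolding u_def s_def
      by (rule proxy_margin_ge[OF norm sel c_pos bounded labels _ ystar_nz dstar_pos margin])
  qed (use c_pos dstar_pos in simp)
  then have "(\<Sum>t\<in>M. hinge u (s t, 1) (lab (Ag t))) \<le> (\<Sum>t\<in>M. 2 / (c * dstar))"
    by (rule sum_mono)
  then have hinge_sum: "(\<Sum>t\<in>M. hinge u (s t, 1) (lab (Ag t))) \<le> 2 / (c * dstar) * card M"
    by (simp add: mult.commute)
  have "card M \<le> (norm ystar ^ 2 + bstar ^ 2) / dual_norm N ystar ^ 2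
      * ((Sup (norm ` \<A>) + 2 / c * Sup (range (\<lambda>y. norm (v y)))) ^ 2 + 1) / (max 0 (dstar - 2 / c)) ^ 2"
    if gt: "2 / c < dstar"
    using strategic_perceptron_mistake_bound[OF norm sel c_pos labels bounded agents ystar_nz dstar_pos
        margin gt, folded M_def]
    unfolding normalized_classifier_bound_eq[OF dstar_pos dual_norm_pos[OF norm ystar_nz] gt,
        unfolded divide_divide_eq_left] .
  then show ?thesis using hinge_sum unfolding M_def s_def u_def by blast
qed

end
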